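(* The finitary symmetric group $\mathrm{FS}(\mathbb{N})$ is a proper subgroup of the bi-immune symmetric group $G_{\mathfrak{B}}$.
   Context: $\mathbb{N}$ denotes the non-negative integers, and $\mathrm{Sym}(\mathbb{N})$ the group of all permutations of $\mathbb{N}$ under composition ($g \circ f$ means apply $f$ first). The support of $\sigma \in \mathrm{Sym}(\mathbb{N})$ is $\{n : \sigma(n) \neq n\}$; $\mathrm{FS}(\mathbb{N})$ is the group of permutations with finite support. For $i \in \mathbb{N}$, $\sigma_{(i)}$ is the permutation swapping $i$ and $i+1$ and fixing all other numbers. For $A \subseteq \mathbb{N}$ with increasing enumeration $a_0 < a_1 < \cdots$, define $\sigma_A(x) = \lim_{n \to \infty} (\sigma_{(a_0)} \circ \sigma_{(a_1)} \circ \cdots \circ \sigma_{(a_n)})(x)$ (eventually constant for each $x$). A set $A$ is immune if it is infinite and contains no infinite computably enumerable subset; $A$ is bi-immune if both $A$ and $\mathbb{N} - A$ are immune. For bi-immune $A$, $\sigma_A$ is a permutation of $\mathbb{N}$. The bi-immune symmetric group $G_{\mathfrak{B}}$ is the subgroup of $\mathrm{Sym}(\mathbb{N})$ generated by $\{\sigma_A : A \text{ bi-immune}\}$. *)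

theory Defs
  imports Main "HOL-Library.Infinite_Set"
begin

text \<open>Syntax of mu-recursive function terms (arity is not enforced; every term
denotes a partial function on argument lists, extra arguments being ignored
and missing projections returning 0). Restricted to one-argument inputs these
are exactly the partial recursive functions.\<close>

datatype recf =
    Z
  | S
  | Id nat
  | Cn recf "recf list"
  | Pr recf recf
  | Mn recf

inductive eval :: "recf \<Rightarrow> nat list \<Rightarrow> nat \<Rightarrow> bool" where
  eval_Z: "eval Z xs 0"
| eval_S: "eval S xs (Suc (hd xs))"
| eval_Id: "eval (Id k) xs (if k < length xs then xs ! k else 0)"
| eval_Cn: "list_all2 (\<lambda>g y. eval g xs y) gs ys \<Longrightarrow> eval f ys z \<Longrightarrow> eval (Cn f gs) xs z"
| eval_Pr0: "eval f xs z \<Longrightarrow> eval (Pr f g) (0 # xs) z"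
| eval_PrS: "eval (Pr f g) (n # xs) r \<Longrightarrow> eval g (n # r # xs) z \<Longrightarrow> eval (Pr f g) (Suc n # xs) z"
| eval_Mn: "eval f (y # xs) 0 \<Longrightarrow> (\<forall>y'<y. \<exists>z. z \<noteq> 0 \<and> eval f (y' # xs) z) \<Longrightarrow> eval (Mn f) xs y"
monos list_all2_mono

definition ce :: "nat set \<Rightarrow> bool" where
  "ce A \<longleftrightarrow> (\<exists>f. A = {x. \<exists>y. eval f [x] y})"

definition immune :: "nat set \<Rightarrow> bool" where
  "immune A \<longleftrightarrow> infinite A \<and> \<not> (\<exists>B. B \<subseteq> A \<and> infinite B \<and> ce B)"

definition bi_immune :: "nat set \<Rightarrow> bool" where
  "bi_immune A \<longleftrightarrow> immune A \<and> immune (UNIV - A)"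

definition adj_swap :: "nat \<Rightarrow> nat \<Rightarrow> nat" where
  "adj_swap i = (\<lambda>n. if n = i then Suc i else if n = Suc i then i else n)"

definition sigma_prefix :: "nat set \<Rightarrow> nat \<Rightarrow> nat \<Rightarrow> nat" where
  "sigma_prefix A n = foldr (\<circ>) (map (\<lambda>k. adj_swap (enumerate A k)) [0..<Suc n]) id"

definition sigma_set :: "nat set \<Rightarrow> nat \<Rightarrow> nat" where
  "sigma_set A x = (THE y. \<exists>N. \<forall>n\<ge>N. sigma_prefix A n x = y)"

definition FS :: "(nat \<Rightarrow> nat) set" where
  "FS = {f. bij f \<and> finite {n. f n \<noteq> n}}"

inductive_set gen_group :: "(nat \<Rightarrow> nat) set \<Rightarrow> (nat \<Rightarrow> nat) set" for X where
  gen_id: "id \<in> gen_group X"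
| gen_base: "f \<in> X \<Longrightarrow> f \<in> gen_group X"
| gen_comp: "f \<in> gen_group X \<Longrightarrow> g \<in> gen_group X \<Longrightarrow> f \<circ> g \<in> gen_group X"
| gen_inv: "f \<in> gen_group X \<Longrightarrow> inv f \<in> gen_group X"

definition G_B :: "(nat \<Rightarrow> nat) set" where
  "G_B = gen_group {sigma_set A | A. bi_immune A}"

end

theory Submission
  imports Defs "HOL-Combinatorics.Permutations" "HOL-Library.Countable"
begin

text \<open>Both the inclusion and its properness come from permutations \<open>\<sigma>\<^sub>A\<close> of a special kind. If \<open>A\<close> contains no
two consecutive numbers, the transpositions \<open>(a a+1)\<close>, \<open>a \<in> A\<close>, have disjoint supports and
\<open>\<sigma>\<^sub>A\<close> is simply their product. A diagonal argument over all infinite c.e. sets produces,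
for every \<open>i\<close>, such a set \<open>A\<close> above \<open>i + 1\<close> for which both \<open>A\<close> and \<open>A \<union> {i}\<close> are bi-immune;
then \<open>\<sigma>\<^bsub>A \<union> {i}\<^esub> \<circ> \<sigma>\<^sub>A = (i i+1)\<close>, so \<open>G\<^sub>\<B>\<close> contains all adjacent transpositions and
hence \<open>FS(\<nat>)\<close>, while \<open>\<sigma>\<^sub>A\<close> itself has infinite support.\<close>

definition sparse :: "nat set \<Rightarrow> bool" where
  "sparse T \<longleftrightarrow> (\<forall>a\<in>T. Suc a \<notin> T)"

definition swap_pairs :: "nat set \<Rightarrow> nat \<Rightarrow> nat" where
  "swap_pairs T x = (if x \<in> T then Suc x else if x \<noteq> 0 \<and> x - 1 \<in> T then x - 1 else x)"

lemma not_in_below_enumerate_0: "s < enumerate T 0 \<Longrightarrow> s \<notin> T"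
  using not_less_Least by (simp add: enumerate_0)

lemma not_in_between_enumerate:
  "infinite T \<Longrightarrow> enumerate T n < s \<Longrightarrow> s < enumerate T (Suc n) \<Longrightarrow> s \<notin> T"
  using enumerate_Suc'' not_less_Least by metis

lemma foldr_comp_snoc: "foldr (\<circ>) (fs @ [f]) id = foldr (\<circ>) fs id \<circ> f"
  by (induction fs) auto

lemma sigma_prefix_0: "sigma_prefix A 0 = adj_swap (enumerate A 0)"
  by (simp add: sigma_prefix_def)

lemma sigma_prefix_Suc:
  "sigma_prefix A (Suc n) = sigma_prefix A n \<circ> adj_swap (enumerate A (Suc n))"
  unfolding sigma_prefix_def by (simp only: upt_Suc_append[of 0 "Suc n"] map_append list.map
      foldr_comp_snoc zero_le)

lemma sigma_prefix_sparse:
  assumes inf: "infinite T" and sp: "sparse T"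
  shows "sigma_prefix T n x = (if x \<le> Suc (enumerate T n) then swap_pairs T x else x)"
proof (induction n arbitrary: x)
  case 0
  have "enumerate T 0 \<in> T" using enumerate_in_set[OF inf] .
  moreover have "Suc (enumerate T 0) \<notin> T" using calculation sp by (simp add: sparse_def)
  moreover have least: "y \<in> T \<Longrightarrow> enumerate T 0 \<le> y" for y
    using not_in_below_enumerate_0 not_le by blast
  ultimately show ?case
    by (auto simp: sigma_prefix_0 adj_swap_def swap_pairs_def dest: least)
next
  case (Suc n)
  let ?a = "enumerate T n" and ?b = "enumerate T (Suc n)"
  have in_T: "?a \<in> T" "?b \<in> T" using enumerate_in_set[OF inf] by auto
  have gap: "Suc ?a < ?b"
    using enumerate_step[OF inf, of n] in_T sp by (metis Suc_lessI sparse_def)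
  have after_b: "Suc ?b \<notin> T" using in_T sp by (simp add: sparse_def)
  have between: "?a < s \<Longrightarrow> s < ?b \<Longrightarrow> s \<notin> T" for s
    using not_in_between_enumerate[OF inf] by blast
  show ?case
  proof (cases "x = ?b \<or> x = Suc ?b")
    case True
    then show ?thesis using Suc.IH gap in_T after_b
      by (auto simp: sigma_prefix_Suc adj_swap_def swap_pairs_def)
  next
    case False
    then have "adj_swap ?b x = x" by (auto simp: adj_swap_def)
    moreover have "Suc ?a < x \<Longrightarrow> x < ?b \<Longrightarrow> swap_pairs T x = x"
      using between[of x] between[of "x - 1"] by (simp add: swap_pairs_def)
    ultimately show ?thesis using Suc.IH False gap by (auto simp: sigma_prefix_Suc)
  qed
qed

lemma sigma_set_sparse:
  assumes "infinite T" "sparse T"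
  shows "sigma_set T = swap_pairs T"
proof
  fix x
  obtain N where N: "x \<le> Suc (enumerate T N)"
    using le_enumerate[OF \<open>infinite T\<close>, of x] le_SucI by blast
  have eventually: "\<forall>n\<ge>N. sigma_prefix T n x = swap_pairs T x"
    using N sigma_prefix_sparse[OF assms] \<open>infinite T\<close> by (auto intro: order_trans)
  show "sigma_set T x = swap_pairs T x"
    unfolding sigma_set_def
  proof (rule the_equality)
    show "\<exists>N. \<forall>n\<ge>N. sigma_prefix T n x = swap_pairs T x" using eventually by blast
  next
    fix y assume "\<exists>N. \<forall>n\<ge>N. sigma_prefix T n x = y"
    then obtain M where "\<forall>n\<ge>M. sigma_prefix T n x = y" by blast
    then show "y = swap_pairs T x" using eventually[rule_format, of "max N M"] by simp
  qed
qed

lemma swap_pairs_involution: "sparse T \<Longrightarrow> swap_pairs T \<circ> swap_pairs T = id"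
  by (auto simp: fun_eq_iff swap_pairs_def sparse_def)

lemma swap_pairs_insert:
  assumes "\<forall>a\<in>T. Suc i < a"
  shows "swap_pairs (insert i T) = adj_swap i \<circ> swap_pairs T"
  using assms by (fastforce simp: fun_eq_iff swap_pairs_def adj_swap_def)

lemma adj_swap_eq_swap_pairs_comp:
  assumes "sparse T" "\<forall>a\<in>T. Suc i < a"
  shows "adj_swap i = swap_pairs (insert i T) \<circ> swap_pairs T"
  using assms by (simp add: swap_pairs_insert comp_assoc swap_pairs_involution)

lemma sparse_insert: "sparse T \<Longrightarrow> \<forall>a\<in>T. Suc i < a \<Longrightarrow> sparse (insert i T)"
  by (auto simp: sparse_def)

lemma infinite_support_swap_pairs: "infinite T \<Longrightarrow> infinite {n. swap_pairs T n \<noteq> n}"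
  by (rule infinite_super[of T]) (auto simp: swap_pairs_def)

instance recf :: countable
  by countable_datatype

text \<open>\<open>ce_enum\<close> lists every infinite c.e. set; finite domains are replaced by the
harmless \<open>UNIV\<close> so that every listed set is infinite.\<close>

definition ce_enum :: "nat \<Rightarrow> nat set" where
  "ce_enum j = (let B = {x. \<exists>y. eval (from_nat j) [x] y} in if infinite B then B else UNIV)"

lemma infinite_ce_enum: "infinite (ce_enum j)"
  by (simp add: ce_enum_def Let_def)

lemma ce_enum_surj: "infinite B \<Longrightarrow> ce B \<Longrightarrow> \<exists>j. ce_enum j = B"
  unfolding ce_def ce_enum_def Let_def by (metis from_nat_to_nat)

lemma bi_immuneI:
  assumes "inj s"
    and "\<And>k. s k \<in> C (k div 2)" and "\<And>B. infinite B \<Longrightarrow> ce B \<Longrightarrow> \<exists>j. C j = B"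
    and "\<And>k. s (2 * k) \<in> X" and "\<And>k. s (Suc (2 * k)) \<notin> X"
  shows "bi_immune X"
proof -
  have "inj (\<lambda>k. s (2 * k))" "inj (\<lambda>k. s (Suc (2 * k)))"
    using \<open>inj s\<close> unfolding inj_def by (metis Suc_inject mult_left_cancel zero_neq_numeral)+
  then have "infinite (range (\<lambda>k. s (2 * k)))" "infinite (range (\<lambda>k. s (Suc (2 * k))))"
    by (simp_all add: finite_image_iff)
  moreover have "range (\<lambda>k. s (2 * k)) \<subseteq> X" "range (\<lambda>k. s (Suc (2 * k))) \<subseteq> UNIV - X"
    using assms(4,5) by blast+
  ultimately have "infinite X" "infinite (UNIV - X)"
    by (metis infinite_super)+
  moreover have "B \<inter> X \<noteq> {}" "B - X \<noteq> {}" if B: "infinite B" "ce B" for B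
  proof -
    obtain j where "C j = B" using assms(3)[OF B] ..
    then have "s (2 * j) \<in> B \<inter> X" "s (Suc (2 * j)) \<in> B - X"
      using assms(2)[of "2 * j"] assms(2)[of "Suc (2 * j)"] assms(4,5) by simp_all
    then show "B \<inter> X \<noteq> {}" "B - X \<noteq> {}" by blast+
  qed
  ultimately show ?thesis
    unfolding bi_immune_def immune_def by blast
qed

definition next_in :: "nat set \<Rightarrow> nat \<Rightarrow> nat" where
  "next_in B m = (LEAST x. x \<in> B \<and> m < x)"

lemma next_in: "infinite B \<Longrightarrow> next_in B m \<in> B \<and> m < next_in B m"
  unfolding next_in_def infinite_nat_iff_unbounded by (rule LeastI_ex) blast

text \<open>Entries \<open>2j\<close> and \<open>2j+1\<close> are picked from the \<open>j\<close>-th infinite c.e. set, so the set of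
even-indexed entries splits every infinite c.e. set.\<close>

primrec diag_seq :: "nat \<Rightarrow> nat \<Rightarrow> nat" where
  "diag_seq i 0 = next_in (ce_enum 0) (Suc i)"
| "diag_seq i (Suc k) = next_in (ce_enum (Suc k div 2)) (Suc (diag_seq i k))"

lemma diag_seq_in_ce_enum: "diag_seq i k \<in> ce_enum (k div 2)"
  by (cases k) (simp_all add: next_in infinite_ce_enum)

lemma diag_seq_gap: "n < m \<Longrightarrow> Suc (diag_seq i n) < diag_seq i m"
proof (induction m)
  case (Suc m)
  have "Suc (diag_seq i m) < diag_seq i (Suc m)"
    by (simp add: next_in infinite_ce_enum)
  with Suc show ?case by (cases "n = m") auto
qed simp

lemma diag_seq_gt: "Suc i < diag_seq i k"
proof -
  have "Suc i < diag_seq i 0" by (simp add: next_in infinite_ce_enum)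
  then show ?thesis using diag_seq_gap[of 0 k i] by (cases k) auto
qed

lemma inj_diag_seq: "inj (diag_seq i)"
  by (rule injI) (metis diag_seq_gap less_SucI less_irrefl_nat linorder_neqE_nat)

lemma Suc_diag_seq_notin_range: "Suc (diag_seq i n) \<notin> range (diag_seq i)"
proof
  assume "Suc (diag_seq i n) \<in> range (diag_seq i)"
  then obtain m where m: "diag_seq i m = Suc (diag_seq i n)" by auto
  show False
  proof (cases "n < m")
    case True then show False using diag_seq_gap[of n m i] m by simp
  next
    case False
    then have "diag_seq i m \<le> diag_seq i n"
      using diag_seq_gap[of m n i] by (cases "m = n") auto
    then show False using m by simp
  qed
qed

definition diag_set :: "nat \<Rightarrow> nat set" where
  "diag_set i = range (\<lambda>k. diag_seq i (2 * k))"

lemma infinite_diag_set: "infinite (diag_set i)"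
proof -
  have "inj (\<lambda>k. diag_seq i (2 * k))"
    using inj_diag_seq[of i] unfolding inj_def by (metis mult_left_cancel zero_neq_numeral)
  then show ?thesis by (auto simp: diag_set_def dest: finite_imageD)
qed

lemma diag_set_gt: "a \<in> diag_set i \<Longrightarrow> Suc i < a"
  using diag_seq_gt by (auto simp: diag_set_def)

lemma sparse_diag_set: "sparse (diag_set i)"
  unfolding sparse_def diag_set_def using Suc_diag_seq_notin_range by blast

lemma bi_immune_diag_set: "bi_immune (diag_set i)" "bi_immune (insert i (diag_set i))"
proof -
  have even_in: "diag_seq i (2 * k) \<in> diag_set i" for k
    by (simp add: diag_set_def)
  have "diag_seq i (Suc (2 * k)) \<noteq> i" for k
    using diag_seq_gt[of i] by (metis Suc_lessD less_irrefl_nat)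
  moreover have "diag_seq i (Suc (2 * k)) \<notin> diag_set i" for k
    using inj_diag_seq[of i] unfolding diag_set_def
    by (auto simp: inj_eq simp del: diag_seq.simps) presburger
  ultimately have odd_out: "diag_seq i (Suc (2 * k)) \<notin> insert i (diag_set i)" for k
    by blast
  show "bi_immune (diag_set i)" "bi_immune (insert i (diag_set i))"
    by (rule bi_immuneI[OF inj_diag_seq diag_seq_in_ce_enum ce_enum_surj];
        use even_in odd_out in blast)+
qed

lemma transpose_Suc_conj:
  "a < b \<Longrightarrow> transpose a (Suc b) = adj_swap b \<circ> transpose a b \<circ> adj_swap b"
  by (auto simp: fun_eq_iff transpose_def adj_swap_def)

lemma transpose_in_gen_group:
  assumes adj: "\<And>i. adj_swap i \<in> gen_group X"
  shows "transpose a b \<in> gen_group X"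
proof -
  have Suc: "transpose a' (Suc c) \<in> gen_group X" if "a' \<le> c" for a' c
    using that
  proof (induction c rule: dec_induct)
    case base
    have "transpose a' (Suc a') = adj_swap a'" by (auto simp: transpose_def adj_swap_def)
    then show ?case using adj by simp
  next
    case (step c)
    then show ?case
      unfolding transpose_Suc_conj[OF le_imp_less_Suc[OF step.hyps(1)]]
      by (intro gen_group.gen_comp adj)
  qed
  have less: "transpose a' b' \<in> gen_group X" if lt: "a' < b'" for a' b'
  proof -
    obtain k where "b' = Suc (a' + k)" using less_imp_Suc_add[OF lt] by blast
    then show ?thesis using Suc[of a' "a' + k"] by simp
  qed
  consider "a < b" | "a = b" | "b < a" by linarith
  then show ?thesis
  proof cases
    case 2 then show ?thesis using gen_group.gen_id by simp
  qed (use less transpose_commute in metis)+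
qed

lemma FS_subset_gen_group:
  assumes "\<And>i. adj_swap i \<in> gen_group X"
  shows "FS \<subseteq> gen_group X"
proof
  fix f assume "f \<in> FS"
  then have "permutation f"
    unfolding FS_def by (simp add: permutation)
  then obtain T where "f permutes T" "finite T"
    using permutation_permutes by blast
  then show "f \<in> gen_group X"
  proof (induction rule: permutes_induct)
    case id then show ?case by (rule gen_group.gen_id)
  next
    case (swap a b p)
    then show ?case by (intro gen_group.gen_comp transpose_in_gen_group[OF assms])
  qed
qed

lemma swap_pairs_diag_set_in_G_B:
  "swap_pairs (diag_set i) \<in> G_B" "swap_pairs (insert i (diag_set i)) \<in> G_B"
proof -
  have "sigma_set (diag_set i) \<in> G_B" "sigma_set (insert i (diag_set i)) \<in> G_B"
    unfolding G_B_def using bi_immune_diag_set by (blast intro: gen_group.gen_base)+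
  moreover have "sigma_set (diag_set i) = swap_pairs (diag_set i)"
    by (rule sigma_set_sparse[OF infinite_diag_set sparse_diag_set])
  moreover have "sigma_set (insert i (diag_set i)) = swap_pairs (insert i (diag_set i))"
    by (rule sigma_set_sparse)
      (use infinite_diag_set sparse_insert[OF sparse_diag_set] diag_set_gt in auto)
  ultimately show "swap_pairs (diag_set i) \<in> G_B" "swap_pairs (insert i (diag_set i)) \<in> G_B"
    by simp_all
qed

lemma adj_swap_in_G_B: "adj_swap i \<in> G_B"
proof -
  have "adj_swap i = swap_pairs (insert i (diag_set i)) \<circ> swap_pairs (diag_set i)"
    by (rule adj_swap_eq_swap_pairs_comp[OF sparse_diag_set]) (use diag_set_gt in blast)
  then show ?thesis
    using swap_pairs_diag_set_in_G_B unfolding G_B_def by (simp add: gen_group.gen_comp)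
qed

theorem lemma2p5:
  shows "FS \<subset> G_B"
proof
  show "FS \<subseteq> G_B"
    using adj_swap_in_G_B unfolding G_B_def by (rule FS_subset_gen_group)
  have "swap_pairs (diag_set 0) \<notin> FS"
    using infinite_support_swap_pairs[OF infinite_diag_set] by (simp add: FS_def)
  then show "FS \<noteq> G_B"
    using swap_pairs_diag_set_in_G_B(1) by blast
qed

end
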